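(* Let $f\in\mathcal{R}$ be a real rational function all of whose poles are roots of unity, and let $L$ be the level of $f$. Then $f$ is a finite real linear combination of the functions \[\Big(x\frac{d}{dx}\Big)^k\Big(\frac{x^j}{1-x^L}\Big),\qquad k\in\mathbb{N}=\{0,1,2,\dots\},\ 0\le j<L,\] and each of these functions is an eigenfunction of $U_{L+1}$ and has level $L$.
   Context: $\mathcal{R}$ denotes the real vector space of rational functions $f(x)=A(x)/B(x)$ with $A,B\in\mathbb{R}[x]$, $B(0)\neq 0$ and $\deg A<\deg B$. For a rational function $f$ with Taylor expansion $f(x)=\sum_{n\ge0}a_nx^n$ at $0$ and a positive integer $p$, $U_pf(x)=\sum_{n\ge 0}a_{pn}x^n$. If all poles of $f$ are roots of unity, the level of $f$ is the least common multiple of the orders of these roots of unity. *)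

theory Defs
  imports "HOL-Computational_Algebra.Computational_Algebra"
begin

text \<open>A real rational function A/B is represented by the pair of real polynomials (A, B);
  membership in the space R: B(0) nonzero and deg A < deg B.\<close>
definition in_R :: "real poly \<Rightarrow> real poly \<Rightarrow> bool" where
  "in_R A B \<longleftrightarrow> poly B 0 \<noteq> 0 \<and> degree A < degree B"

definition rat_fps :: "real poly \<Rightarrow> real poly \<Rightarrow> real fps" where
  "rat_fps A B = fps_of_poly A / fps_of_poly B"

text \<open>Complex poles of A/B: zeros z of B whose multiplicity exceeds that in A
  (independent of the chosen representation; the zero function has no poles).\<close>
definition poles :: "real poly \<Rightarrow> real poly \<Rightarrow> complex set" where
  "poles A B = {z. A \<noteq> 0 \<and> poly (map_poly complex_of_real B) z = 0 \<and>
       order z (map_poly complex_of_real A) < order z (map_poly complex_of_real B)}"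

definition root_of_unity :: "complex \<Rightarrow> bool" where
  "root_of_unity z \<longleftrightarrow> (\<exists>n>0. z ^ n = 1)"

definition unity_order :: "complex \<Rightarrow> nat" where
  "unity_order z = (LEAST n. n > 0 \<and> z ^ n = 1)"

definition level :: "real poly \<Rightarrow> real poly \<Rightarrow> nat" where
  "level A B = Lcm (unity_order ` poles A B)"

definition U_op :: "nat \<Rightarrow> real fps \<Rightarrow> real fps" where
  "U_op p F = Abs_fps (\<lambda>n. F $ (p * n))"

definition theta :: "real fps \<Rightarrow> real fps" where
  "theta F = fps_X * fps_deriv F"

definition basis_fn :: "nat \<Rightarrow> nat \<Rightarrow> nat \<Rightarrow> real fps" where
  "basis_fn L k j = (theta ^^ k) (fps_X ^ j / (1 - fps_X ^ L))"

end

theory Submission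
  imports Defs
begin

text \<open>Every pole of f is an L-th root of unity of multiplicity at most deg B, so B divides
  A (1 - x^L)^M for M = deg B and f = P/(1 - x^L)^M with deg P < L M. Such fractions have
  quasi-polynomial Taylor coefficients of period L (a polynomial in n on each residue class of n
  modulo L), by induction on M using theta = x d/dx; and a quasi-polynomial is a combination of
  the basis functions, the n-th coefficient of (x d/dx)^k (x^j/(1 - x^L)) being n^k if n = j
  (mod L) and 0 otherwise. This coefficient formula shows that U_(L+1) multiplies it by
  (L+1)^k. Conversely (x d/dx)^k (x^j/(1 - x^L)) = P/(1 - x^L)^(k+1), so its level L' divides L;
  were L' < L, its coefficients would be quasi-polynomial of period L', yet on the class of j
  modulo L' they equal n^k infinitely often and vanish infinitely often.\<close>

section \<open>The operator theta and the series 1/(1 - x^N)\<close>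

lemma theta_nth: "theta F $ n = of_nat n * F $ n"
  by (cases n) (simp_all add: theta_def)

lemma theta_mult: "theta (F * G) = theta F * G + F * theta G"
  by (simp add: theta_def algebra_simps)

lemma theta_fps_X_power: "theta (fps_X ^ a) = fps_const (real a) * fps_X ^ a"
  by (rule fps_ext) (simp add: theta_nth)

lemma theta_fps_of_poly: "theta (fps_of_poly P) = fps_of_poly (pCons 0 (pderiv P))"
  by (simp add: theta_def fps_of_poly_pCons fps_of_poly_pderiv mult.commute)

definition geom_fps :: "nat \<Rightarrow> real fps" where
  "geom_fps N = inverse (1 - fps_X ^ N)"

lemma one_minus_fps_X_power_times_geom_fps:
  "N > 0 \<Longrightarrow> (1 - fps_X ^ N) * geom_fps N = 1"
  unfolding geom_fps_def by (rule inverse_mult_eq_1') simp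

lemma geom_fps_nth:
  assumes "N > 0"
  shows "geom_fps N $ n = (if N dvd n then 1 else 0)"
proof -
  define G :: "real fps" where "G = Abs_fps (\<lambda>n. if N dvd n then 1 else 0)"
  have "(1 - fps_X ^ N) * G = 1"
  proof (rule fps_ext)
    fix n
    show "((1 - fps_X ^ N) * G) $ n = (1 :: real fps) $ n"
      using assms
      by (cases "n < N") (auto simp: G_def algebra_simps fps_X_power_mult_nth dvd_minus_self)
  qed
  then have "geom_fps N = G"
    unfolding geom_fps_def by (rule fps_inverse_unique)
  then show ?thesis by (simp add: G_def)
qed

lemma fps_X_power_geom_fps_nth:
  assumes "j < N"
  shows "(fps_X ^ j * geom_fps N) $ n = (if n mod N = j then 1 else 0)"
proof (cases "j \<le> n")
  case True
  then have "n mod N = j \<longleftrightarrow> N dvd n - j"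
    using assms mod_eq_dvd_iff_nat[of j n N] by simp
  then show ?thesis using assms True by (simp add: fps_X_power_mult_nth geom_fps_nth)
next
  case False
  then show ?thesis using assms by (simp add: fps_X_power_mult_nth)
qed

lemma basis_fn_0: "j < N \<Longrightarrow> basis_fn N 0 j = fps_X ^ j * geom_fps N"
  by (simp add: basis_fn_def geom_fps_def fps_divide_unit)

lemma basis_fn_Suc: "basis_fn N (Suc k) j = theta (basis_fn N k j)"
  by (simp add: basis_fn_def)

lemma basis_fn_nth:
  assumes "j < N"
  shows "basis_fn N k j $ n = (if n mod N = j then real n ^ k else 0)"
  by (induction k) (simp_all add: basis_fn_0 basis_fn_Suc fps_X_power_geom_fps_nth assms theta_nth)

lemma theta_geom_fps_power:
  assumes "N > 0"
  shows "theta (geom_fps N ^ M) = fps_const (real (M * N)) * fps_X ^ N * geom_fps N ^ (M + 1)"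
proof (cases M)
  case 0
  then show ?thesis by (simp add: theta_def)
next
  case (Suc m)
  have "fps_deriv (geom_fps N) = fps_const (real N) * fps_X ^ (N - 1) * geom_fps N ^ 2"
    unfolding geom_fps_def using assms by (subst fps_inverse_deriv) (simp_all add: fps_deriv_power)
  then have "theta (geom_fps N ^ M) = fps_X * (fps_const (real M)
      * (fps_const (real N) * fps_X ^ (N - 1) * geom_fps N ^ 2) * geom_fps N ^ (M - 1))"
    by (simp only: theta_def fps_deriv_power)
  also have "\<dots> = fps_const (real (M * N)) * (fps_X * fps_X ^ (N - 1))
      * (geom_fps N ^ 2 * geom_fps N ^ m)"
    by (simp only: Suc diff_Suc_1 of_nat_mult fps_const_mult[symmetric] mult_ac)
  also have "fps_X * fps_X ^ (N - 1) = (fps_X ^ N :: real fps)"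
    using assms by (simp flip: power_Suc)
  also have "geom_fps N ^ 2 * geom_fps N ^ m = geom_fps N ^ (M + 1)"
    by (simp add: Suc flip: power_add)
  finally show ?thesis .
qed

lemma theta_mult_geom_fps_power:
  assumes "N > 0"
  shows "theta (F * geom_fps N ^ M)
    = theta F * geom_fps N ^ M + fps_const (real (M * N)) * fps_X ^ N * F * geom_fps N ^ (M + 1)"
  by (simp add: theta_mult theta_geom_fps_power[OF assms] mult_ac)

lemma geom_fps_power_eq:
  assumes "N > 0"
  shows "geom_fps N ^ M = (1 - fps_X ^ N) * geom_fps N ^ (M + 1)"
proof -
  have "geom_fps N ^ M = geom_fps N ^ M * ((1 - fps_X ^ N) * geom_fps N)"
    by (simp add: one_minus_fps_X_power_times_geom_fps[OF assms])
  also have "\<dots> = (1 - fps_X ^ N) * geom_fps N ^ (M + 1)"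
    by (simp add: mult_ac)
  finally show ?thesis .
qed

section \<open>Quasi-polynomial coefficients\<close>

definition quasi_poly :: "nat \<Rightarrow> real fps \<Rightarrow> bool" where
  "quasi_poly N F \<longleftrightarrow> (\<exists>q. \<forall>n. F $ n = poly (q (n mod N)) (real n))"

lemma quasi_poly_add:
  assumes "quasi_poly N F" "quasi_poly N G" shows "quasi_poly N (F + G)"
proof -
  obtain p q where "\<forall>n. F $ n = poly (p (n mod N)) (real n)"
    and "\<forall>n. G $ n = poly (q (n mod N)) (real n)"
    using assms unfolding quasi_poly_def by blast
  then show ?thesis unfolding quasi_poly_def by (intro exI[of _ "\<lambda>i. p i + q i"]) simp
qed

lemma quasi_poly_diff:
  assumes "quasi_poly N F" "quasi_poly N G" shows "quasi_poly N (F - G)"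
proof -
  obtain p q where "\<forall>n. F $ n = poly (p (n mod N)) (real n)"
    and "\<forall>n. G $ n = poly (q (n mod N)) (real n)"
    using assms unfolding quasi_poly_def by blast
  then show ?thesis unfolding quasi_poly_def by (intro exI[of _ "\<lambda>i. p i - q i"]) simp
qed

lemma quasi_poly_const_mult:
  assumes "quasi_poly N F" shows "quasi_poly N (fps_const c * F)"
proof -
  obtain q where "\<forall>n. F $ n = poly (q (n mod N)) (real n)"
    using assms unfolding quasi_poly_def by blast
  then show ?thesis unfolding quasi_poly_def by (intro exI[of _ "\<lambda>i. smult c (q i)"]) simp
qed

lemma quasi_poly_theta:
  assumes "quasi_poly N F" shows "quasi_poly N (theta F)"
proof -
  obtain q where "\<forall>n. F $ n = poly (q (n mod N)) (real n)"
    using assms unfolding quasi_poly_def by blast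
  then show ?thesis
    unfolding quasi_poly_def by (intro exI[of _ "\<lambda>i. [:0, 1:] * q i"]) (simp add: theta_nth)
qed

lemma quasi_poly_sum:
  "(\<And>i. i \<in> S \<Longrightarrow> quasi_poly N (f i)) \<Longrightarrow> quasi_poly N (\<Sum>i\<in>S. f i)"
proof (induction S rule: infinite_finite_induct)
  case (infinite S)
  show ?case unfolding quasi_poly_def by (intro exI[of _ "\<lambda>_. 0"]) (simp add: infinite)
next
  case empty
  show ?case unfolding quasi_poly_def by (intro exI[of _ "\<lambda>_. 0"]) simp
qed (simp add: quasi_poly_add)

lemma quasi_poly_fps_X_power_geom_fps:
  assumes "j < N" shows "quasi_poly N (fps_X ^ j * geom_fps N)"
  unfolding quasi_poly_def fps_X_power_geom_fps_nth[OF assms]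
  by (intro exI[of _ "\<lambda>i. if i = j then 1 else 0"]) simp

text \<open>For N \<le> a, x^a/(1-x^N)^(M+1) is a multiple of (theta - (a - N)) applied to
  x^(a-N)/(1-x^N)^M; the case a < N reduces to this one via
  x^a/(1-x^N)^(M+1) = x^a/(1-x^N)^M + x^(a+N)/(1-x^N)^(M+1).\<close>
lemma quasi_poly_fps_X_power_geom_fps_power:
  assumes "N > 0" "M \<ge> 1" "a < N * M"
  shows "quasi_poly N (fps_X ^ a * geom_fps N ^ M)"
  using assms(2,3)
proof (induction M arbitrary: a rule: nat_induct_at_least)
  case base
  then show ?case by (simp add: quasi_poly_fps_X_power_geom_fps)
next
  case (Suc M)
  have high: "quasi_poly N (fps_X ^ b * geom_fps N ^ (M + 1))" if "N \<le> b" "b < N * Suc M" for b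
  proof -
    define c where "c = b - N"
    have b: "b = c + N" using \<open>N \<le> b\<close> by (simp add: c_def)
    have "c < N * M" using that by (simp add: b)
    then have "quasi_poly N (fps_X ^ c * geom_fps N ^ M)" by (rule Suc.IH)
    then have "quasi_poly N (theta (fps_X ^ c * geom_fps N ^ M)
        - fps_const (real c) * (fps_X ^ c * geom_fps N ^ M))"
      by (intro quasi_poly_diff quasi_poly_theta quasi_poly_const_mult)
    also have "theta (fps_X ^ c * geom_fps N ^ M)
        - fps_const (real c) * (fps_X ^ c * geom_fps N ^ M)
        = fps_const (real (M * N)) * (fps_X ^ b * geom_fps N ^ (M + 1))"
      unfolding theta_mult_geom_fps_power[OF assms(1)] theta_fps_X_power b
      by (simp add: power_add algebra_simps)
    finally have "quasi_poly N (fps_const (1 / real (M * N)) *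
        (fps_const (real (M * N)) * (fps_X ^ b * geom_fps N ^ (M + 1))))"
      by (rule quasi_poly_const_mult)
    then show ?thesis using Suc.hyps assms(1) by (simp add: mult.assoc[symmetric])
  qed
  show ?case
  proof (cases "N \<le> a")
    case True
    then show ?thesis using high Suc.prems by simp
  next
    case False
    moreover have "N \<le> N * M" using Suc.hyps by simp
    ultimately have "a < N * M" by linarith
    then have "quasi_poly N (fps_X ^ a * geom_fps N ^ M + fps_X ^ (a + N) * geom_fps N ^ (M + 1))"
      using False Suc.hyps by (intro quasi_poly_add Suc.IH high) auto
    also have "fps_X ^ a * geom_fps N ^ M + fps_X ^ (a + N) * geom_fps N ^ (M + 1)
        = fps_X ^ a * geom_fps N ^ (M + 1)"
      unfolding geom_fps_power_eq[OF assms(1), of M] by (simp add: power_add algebra_simps)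
    finally show ?thesis by simp
  qed
qed

lemma quasi_poly_fps_of_poly_geom_fps_power:
  assumes "N > 0" "M \<ge> 1" "degree P < N * M"
  shows "quasi_poly N (fps_of_poly P * geom_fps N ^ M)"
proof -
  have "fps_of_poly P * geom_fps N ^ M
      = (\<Sum>i\<le>degree P. fps_const (coeff P i) * (fps_X ^ i * geom_fps N ^ M))"
    by (subst poly_as_sum_of_monoms[symmetric])
       (simp add: fps_of_poly_sum fps_of_poly_monom sum_distrib_right mult.assoc)
  also have "quasi_poly N \<dots>"
    using assms
    by (intro quasi_poly_sum quasi_poly_const_mult quasi_poly_fps_X_power_geom_fps_power) auto
  finally show ?thesis .
qed

lemma quasi_poly_imp_basis_sum:
  assumes "N > 0" "quasi_poly N F"
  shows "\<exists>K c. F = (\<Sum>k<K. \<Sum>j<N. fps_const (c k j) * basis_fn N k j)"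
proof -
  obtain q where q: "\<And>n. F $ n = poly (q (n mod N)) (real n)"
    using assms(2) unfolding quasi_poly_def by blast
  define K where "K = Suc (Max ((\<lambda>j. degree (q j)) ` {..<N}))"
  have deg: "degree (q j) < K" if "j < N" for j
    using that by (auto simp: K_def less_Suc_eq_le)
  have nth: "F $ n = (\<Sum>k<K. \<Sum>j<N. fps_const (coeff (q j) k) * basis_fn N k j) $ n" for n
  proof -
    have "(\<Sum>k<K. \<Sum>j<N. fps_const (coeff (q j) k) * basis_fn N k j) $ n
        = (\<Sum>k<K. \<Sum>j<N. if j = n mod N then coeff (q j) k * real n ^ k else 0)"
      by (simp add: fps_sum_nth basis_fn_nth if_distrib eq_commute cong: if_cong)
    also have "\<dots> = (\<Sum>k<K. coeff (q (n mod N)) k * real n ^ k)"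
      using assms(1) by simp
    also have "\<dots> = poly (q (n mod N)) (real n)"
      using deg[of "n mod N"] assms(1) unfolding poly_altdef
      by (intro sum.mono_neutral_right) (auto simp: coeff_eq_0)
    finally show ?thesis by (simp add: q)
  qed
  show ?thesis
  proof (intro exI)
    show "F = (\<Sum>k<K. \<Sum>j<N. fps_const (coeff (q j) k) * basis_fn N k j)"
      using nth by (rule fps_ext)
  qed
qed

section \<open>Rational functions with poles at roots of unity\<close>

abbreviation of_real_poly :: "real poly \<Rightarrow> complex poly" where
  "of_real_poly \<equiv> map_poly of_real"

lemma of_real_poly_add: "of_real_poly (p + q) = of_real_poly p + of_real_poly q"
  by (rule poly_eqI) (simp add: coeff_map_poly)

lemma of_real_poly_mult: "of_real_poly (p * q) = of_real_poly p * of_real_poly q"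
  by (rule poly_eqI) (simp add: coeff_map_poly coeff_mult of_real_sum)

lemma of_real_poly_power: "of_real_poly (p ^ n) = of_real_poly p ^ n"
  by (induction n) (simp_all add: of_real_poly_mult)

lemma of_real_poly_eq_0_iff: "of_real_poly p = 0 \<longleftrightarrow> p = 0"
  by (rule map_poly_eq_0_iff) auto

lemma of_real_poly_diff: "of_real_poly (p - q) = of_real_poly p - of_real_poly q"
  by (rule poly_eqI) (simp add: coeff_map_poly)

lemma degree_of_real_poly: "degree (of_real_poly p) = degree p"
  by (rule degree_map_poly) auto

lemma dvd_if_order_le:
  fixes p q :: "complex poly"
  assumes "p \<noteq> 0" "q \<noteq> 0" "\<And>z. order z p \<le> order z q"
  shows "p dvd q"
  using assms
proof (induction p arbitrary: q rule: poly_root_order_induct)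
  case 0
  then show ?case by simp
next
  case (no_roots p)
  then have "constant (poly p)" using fundamental_theorem_of_algebra by blast
  then have "degree p = 0" by (simp add: constant_degree)
  then show ?case using no_roots.prems(1) by (simp add: is_unit_iff_degree unit_imp_dvd)
next
  case (root p x n)
  have p: "p \<noteq> 0" using root.prems(1) by auto
  have "order x ([:-x, 1:] ^ n * p) = n"
    using root.prems(1) root.hyps(2) by (simp add: order_mult order_power_n_n order_0I)
  then have "[:-x, 1:] ^ n dvd q"
    using root.prems(3)[of x] by (simp add: order_divides)
  then obtain r where r: "q = [:-x, 1:] ^ n * r" by (elim dvdE)
  have "r \<noteq> 0" using root.prems(2) r by auto
  have "order z p \<le> order z r" for z
    using root.prems root.prems(3)[of z] unfolding r by (simp add: order_mult)
  then have "p dvd r" using root.IH p \<open>r \<noteq> 0\<close> by blast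
  then show ?case unfolding r by (rule mult_dvd_mono[OF dvd_refl])
qed

lemma dvd_if_of_real_poly_dvd:
  fixes p q :: "real poly"
  assumes "of_real_poly p dvd of_real_poly q"
  shows "p dvd q"
proof (cases "p = 0")
  case True
  then show ?thesis using assms by (simp add: of_real_poly_eq_0_iff)
next
  case False
  define r where "r = q mod p"
  have "of_real_poly q = of_real_poly (q div p) * of_real_poly p + of_real_poly r"
    by (simp add: r_def flip: of_real_poly_mult of_real_poly_add)
  then have "of_real_poly p dvd of_real_poly r"
    using assms by (metis dvd_add_right_iff dvd_triv_right)
  have "r = 0"
  proof (rule ccontr)
    assume "r \<noteq> 0"
    then have "degree p \<le> degree r"
      using dvd_imp_degree_le[OF \<open>of_real_poly p dvd of_real_poly r\<close>]
      by (simp add: of_real_poly_eq_0_iff degree_of_real_poly)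
    moreover have "degree r < degree p"
      using False \<open>r \<noteq> 0\<close> unfolding r_def by (rule degree_mod_less')
    ultimately show False by simp
  qed
  then show ?thesis by (simp add: r_def mod_eq_0_iff_dvd)
qed

definition geom_denom :: "nat \<Rightarrow> real poly" where
  "geom_denom N = 1 - monom 1 N"

lemma degree_geom_denom:
  assumes "N > 0" shows "degree (geom_denom N) = N"
proof (rule antisym)
  show "degree (geom_denom N) \<le> N"
    unfolding geom_denom_def by (rule degree_diff_le) (simp_all add: degree_monom_le)
  show "N \<le> degree (geom_denom N)"
    using assms by (intro le_degree) (simp add: geom_denom_def coeff_monom)
qed

lemma geom_denom_nonzero: "N > 0 \<Longrightarrow> geom_denom N \<noteq> 0"
  using degree_geom_denom[of N] by auto

lemma poly_geom_denom_0: "N > 0 \<Longrightarrow> poly (geom_denom N) 0 = 1"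
  by (simp add: geom_denom_def poly_monom)

lemma poly_of_real_poly_geom_denom: "poly (of_real_poly (geom_denom N)) z = 1 - z ^ N"
  by (simp add: geom_denom_def of_real_poly_diff map_poly_monom poly_monom)

lemma fps_of_poly_geom_denom: "fps_of_poly (geom_denom N) = 1 - fps_X ^ N"
  by (simp add: geom_denom_def fps_of_poly_diff fps_of_poly_monom')

lemma rat_fps_cross_mult:
  assumes "poly B 0 \<noteq> 0" "poly Q 0 \<noteq> 0" "A * Q = B * P"
  shows "rat_fps A B = rat_fps P Q"
proof -
  have B: "fps_of_poly B $ 0 \<noteq> 0" and Q: "fps_of_poly Q $ 0 \<noteq> 0"
    using assms(1,2) by (simp_all add: poly_0_coeff_0)
  have "rat_fps A B
      = fps_of_poly A * inverse (fps_of_poly B) * (fps_of_poly Q * inverse (fps_of_poly Q))"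
    using B Q by (simp add: rat_fps_def fps_divide_unit inverse_mult_eq_1')
  also have "\<dots> = fps_of_poly (A * Q) * inverse (fps_of_poly B) * inverse (fps_of_poly Q)"
    by (simp add: fps_of_poly_mult mult_ac)
  also have "\<dots>
      = fps_of_poly P * inverse (fps_of_poly Q) * (fps_of_poly B * inverse (fps_of_poly B))"
    by (simp add: assms(3) fps_of_poly_mult mult_ac)
  also have "\<dots> = rat_fps P Q"
    using B Q by (simp add: rat_fps_def fps_divide_unit inverse_mult_eq_1')
  finally show ?thesis .
qed

lemma rat_fps_geom_denom_power:
  "N > 0 \<Longrightarrow> rat_fps P (geom_denom N ^ M) = fps_of_poly P * geom_fps N ^ M"
  by (simp add: rat_fps_def fps_of_poly_power fps_of_poly_geom_denom fps_divide_unit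
      geom_fps_def fps_inverse_power)

lemma in_R_nonzero: "in_R A B \<Longrightarrow> B \<noteq> 0"
  by (auto simp: in_R_def)

lemma finite_poles: "B \<noteq> 0 \<Longrightarrow> finite (poles A B)"
  by (rule finite_subset[of _ "{z. poly (of_real_poly B) z = 0}"])
     (auto simp: poles_def of_real_poly_eq_0_iff intro: poly_roots_finite)

text \<open>A pole has multiplicity at most degree B and is a root of 1 - x^N, so its multiplicity
  in (1 - x^N)^(degree B) is at least its multiplicity in B.\<close>
lemma dvd_mult_geom_denom_power:
  assumes "B \<noteq> 0" "N > 0" "\<forall>z\<in>poles A B. z ^ N = 1"
  shows "B dvd A * geom_denom N ^ degree B"
proof (cases "A = 0")
  case True
  then show ?thesis by simp
next
  case False
  define M where "M = degree B"
  define C where "C = of_real_poly (A * geom_denom N ^ M)"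
  have C: "C = of_real_poly A * of_real_poly (geom_denom N) ^ M"
    by (simp add: C_def of_real_poly_mult of_real_poly_power)
  have "C \<noteq> 0"
    using False geom_denom_nonzero[OF assms(2)] by (simp add: C_def of_real_poly_eq_0_iff)
  have "order z (of_real_poly B) \<le> order z C" for z
  proof (cases "z \<in> poles A B")
    case True
    then have "poly (of_real_poly (geom_denom N)) z = 0"
      using assms(3) by (simp add: poly_of_real_poly_geom_denom)
    then have "[:-z, 1:] ^ M dvd of_real_poly (geom_denom N) ^ M"
      by (simp add: poly_eq_0_iff_dvd dvd_power_same)
    also have "\<dots> dvd C" by (simp add: C)
    finally have "M \<le> order z C" using \<open>C \<noteq> 0\<close> by (simp add: order_divides)
    moreover have "order z (of_real_poly B) \<le> M"
      using order_degree[of "of_real_poly B" z] assms(1)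
      by (simp add: of_real_poly_eq_0_iff degree_of_real_poly M_def)
    ultimately show ?thesis by simp
  next
    case False
    then consider "poly (of_real_poly B) z \<noteq> 0"
      | "order z (of_real_poly B) \<le> order z (of_real_poly A)"
      using \<open>A \<noteq> 0\<close> unfolding poles_def by force
    then show ?thesis
    proof cases
      case 1
      then show ?thesis by (simp add: order_0I)
    next
      case 2
      moreover have "order z (of_real_poly A) \<le> order z C"
        using \<open>C \<noteq> 0\<close> by (intro dvd_imp_order_le) (simp_all add: C)
      ultimately show ?thesis by simp
    qed
  qed
  then have "of_real_poly B dvd C"
    using assms(1) \<open>C \<noteq> 0\<close>
    by (intro dvd_if_order_le) (simp_all add: of_real_poly_eq_0_iff)
  then show ?thesis unfolding C_def M_def by (rule dvd_if_of_real_poly_dvd)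
qed

lemma quasi_poly_rat_fps:
  assumes "in_R A B" "N > 0" "\<forall>z\<in>poles A B. z ^ N = 1"
  shows "quasi_poly N (rat_fps A B)"
proof -
  define M where "M = degree B"
  have B: "B \<noteq> 0" "poly B 0 \<noteq> 0" and "degree A < M"
    using assms(1) by (auto simp: in_R_def M_def)
  obtain P where P: "A * geom_denom N ^ M = B * P"
    using dvd_mult_geom_denom_power[OF B(1) assms(2,3)] by (auto simp: M_def elim: dvdE)
  have "degree P < N * M"
  proof (cases "P = 0")
    case False
    then have "A \<noteq> 0" using P B geom_denom_nonzero[OF assms(2)] by auto
    then have "degree A + N * M = M + degree P"
      using arg_cong[OF P, of degree] B(1) False geom_denom_nonzero[OF assms(2)]
      by (simp add: degree_mult_eq degree_power_eq degree_geom_denom[OF assms(2)] M_def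
          mult.commute)
    then show ?thesis using \<open>degree A < M\<close> by linarith
  qed (use assms(2) \<open>degree A < M\<close> in simp)
  have "rat_fps A B = rat_fps P (geom_denom N ^ M)"
    using B(2) P
    by (intro rat_fps_cross_mult) (simp_all add: poly_power poly_geom_denom_0[OF assms(2)])
  also have "\<dots> = fps_of_poly P * geom_fps N ^ M"
    by (rule rat_fps_geom_denom_power[OF assms(2)])
  finally show ?thesis
    using quasi_poly_fps_of_poly_geom_fps_power[OF assms(2) _ \<open>degree P < N * M\<close>]
      \<open>degree A < M\<close> by simp
qed

section \<open>Orders of roots of unity and the level\<close>

lemma unity_order:
  assumes "root_of_unity z" shows "unity_order z > 0" "z ^ unity_order z = 1"
  using LeastI_ex[OF assms[unfolded root_of_unity_def]] by (simp_all add: unity_order_def)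

lemma unity_order_dvd:
  assumes "z ^ n = 1" shows "unity_order z dvd n"
proof (cases "n = 0")
  case False
  define d where "d = unity_order z"
  have "root_of_unity z" using assms False unfolding root_of_unity_def by blast
  then have d: "d > 0" "z ^ d = 1" using unity_order by (simp_all add: d_def)
  have "z ^ n = (z ^ d) ^ (n div d) * z ^ (n mod d)"
    by (simp flip: power_mult power_add)
  then have "z ^ (n mod d) = 1" using assms d(2) by simp
  moreover have "\<not> (n mod d > 0 \<and> z ^ (n mod d) = 1)"
    using d(1) unfolding d_def unity_order_def by (intro not_less_Least) simp
  ultimately show ?thesis by (simp add: d_def mod_eq_0_iff_dvd)
qed simp

lemma level_pos:
  assumes "finite (poles A B)" "\<forall>z\<in>poles A B. root_of_unity z"
  shows "level A B > 0"
proof -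
  have "\<forall>z\<in>poles A B. 0 < unity_order z" using assms(2) unity_order(1) by blast
  then have "0 \<notin> unity_order ` poles A B" by auto
  moreover have "finite (unity_order ` poles A B)" using assms(1) by simp
  ultimately have "Lcm (unity_order ` poles A B) \<noteq> 0" by (simp add: Lcm_0_iff)
  then show ?thesis by (simp add: level_def)
qed

lemma power_level_eq_1:
  assumes "z \<in> poles A B" "root_of_unity z"
  shows "z ^ level A B = 1"
proof -
  have "unity_order z dvd level A B"
    unfolding level_def using assms(1) by (simp add: dvd_Lcm)
  then obtain c where "level A B = unity_order z * c" by (elim dvdE)
  then show ?thesis using unity_order(2)[OF assms(2)] by (simp add: power_mult)
qed

lemma level_dvd: "\<forall>z\<in>poles A B. z ^ N = 1 \<Longrightarrow> level A B dvd N"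
  unfolding level_def by (auto intro: Lcm_least unity_order_dvd)

section \<open>The basis functions\<close>

lemma basis_fn_nonzero:
  assumes "j < N" shows "basis_fn N k j \<noteq> 0"
proof -
  have "basis_fn N k j $ (j + N) = real (j + N) ^ k"
    using assms by (simp add: basis_fn_nth)
  also have "\<dots> \<noteq> 0" using assms by simp
  finally show ?thesis by auto
qed

lemma U_op_basis_fn:
  assumes "j < N" "p mod N = 1 mod N"
  shows "U_op p (basis_fn N k j) = fps_const (real p ^ k) * basis_fn N k j"
proof (rule fps_ext)
  fix n
  have "(p * n) mod N = n mod N"
    using mod_mult_left_eq[of p N n] mod_mult_left_eq[of 1 N n] assms(2) by simp
  then show "U_op p (basis_fn N k j) $ n = (fps_const (real p ^ k) * basis_fn N k j) $ n"
    using assms(1) by (simp add: U_op_def basis_fn_nth power_mult_distrib)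
qed

lemma basis_fn_eq_fraction:
  assumes "N > 0" "j < N"
  shows "\<exists>P. degree P < N * (k + 1) \<and>
           basis_fn N k j = fps_of_poly P * geom_fps N ^ (k + 1)"
proof (induction k)
  case 0
  show ?case using assms
    by (intro exI[of _ "monom 1 j"]) (simp add: basis_fn_0 fps_of_poly_monom' degree_monom_eq)
next
  case (Suc k)
  then obtain P where P: "degree P < N * (k + 1)"
      "basis_fn N k j = fps_of_poly P * geom_fps N ^ (k + 1)"
    by blast
  define P' where
    "P' = pCons 0 (pderiv P) * geom_denom N + smult (real ((k + 1) * N)) (monom 1 N * P)"
  have "basis_fn N (Suc k) j = fps_of_poly (pCons 0 (pderiv P)) * geom_fps N ^ (k + 1)
      + fps_const (real ((k + 1) * N)) * fps_X ^ N * fps_of_poly P * geom_fps N ^ (k + 1 + 1)"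
    unfolding basis_fn_Suc P(2) theta_mult_geom_fps_power[OF assms(1)] theta_fps_of_poly
    ..
  also have "\<dots> = fps_of_poly P' * geom_fps N ^ (Suc k + 1)"
  proof -
    have "fps_of_poly P' = fps_of_poly (pCons 0 (pderiv P)) * (1 - fps_X ^ N)
        + fps_const (real ((k + 1) * N)) * fps_X ^ N * fps_of_poly P"
      unfolding P'_def by (simp only: fps_of_poly_add fps_of_poly_mult fps_of_poly_smult
          fps_of_poly_monom' fps_of_poly_geom_denom mult.assoc)
    then show ?thesis
      unfolding geom_fps_power_eq[OF assms(1), of "k + 1"]
      by (simp only: distrib_left distrib_right mult_ac Suc_eq_plus1)
  qed
  finally have "basis_fn N (Suc k) j = fps_of_poly P' * geom_fps N ^ (Suc k + 1)" .
  moreover have "degree (pCons 0 (pderiv P)) \<le> degree P"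
    by (cases "pderiv P = 0") (auto simp: degree_pderiv pderiv_eq_0_iff)
  then have "degree P' < N * (Suc k + 1)"
    unfolding P'_def using P(1) degree_geom_denom[OF assms(1)]
    by (intro degree_add_less le_less_trans[OF degree_mult_le] le_less_trans[OF degree_smult_le])
       (auto simp: degree_monom_eq)
  ultimately show ?case by blast
qed

lemma poly_eq_0_if_zero_on_progression:
  fixes p :: "real poly"
  assumes "b > 0" "\<And>t. poly p (real (a + b * t)) = 0"
  shows "p = 0"
proof (rule ccontr)
  let ?f = "\<lambda>t. real (a + b * t)"
  assume "p \<noteq> 0"
  then have "finite {x. poly p x = 0}" by (rule poly_roots_finite)
  moreover have "range ?f \<subseteq> {x. poly p x = 0}" using assms(2) by auto
  ultimately have "finite (range ?f)" by (rule finite_subset[rotated])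
  moreover have "inj ?f" using assms(1) by (auto intro: injI)
  ultimately have "finite (UNIV :: nat set)" by (rule finite_imageD)
  then show False by simp
qed

text \<open>On the residue class of j modulo M, the coefficients of basis_fn N k j are n^k for n = j
  (mod N) and 0 for n = j + M (mod N); no single polynomial interpolates both.\<close>
lemma basis_fn_not_quasi_poly:
  assumes "j < N" "0 < M" "M < N"
  shows "\<not> quasi_poly M (basis_fn N k j)"
proof
  assume "quasi_poly M (basis_fn N k j)"
  then obtain q where q: "\<And>n. basis_fn N k j $ n = poly (q (n mod M)) (real n)"
    unfolding quasi_poly_def by blast
  define r where "r = q (j mod M)"
  have "poly (r - monom 1 k) (real (j + M * N * t)) = 0" for t
  proof -
    have "(j + M * N * t) mod N = j"
      using assms(1) by (simp add: mult.commute[of M N] mult.assoc)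
    moreover have "(j + M * N * t) mod M = j mod M" by (simp add: mult.assoc)
    ultimately show ?thesis
      using q[of "j + M * N * t"] assms(1) by (simp add: basis_fn_nth r_def poly_monom)
  qed
  then have "r - monom 1 k = 0"
    using assms by (intro poly_eq_0_if_zero_on_progression[where a = j and b = "M * N"]) auto
  have "(j + M) mod N \<noteq> j"
  proof (cases "j + M < N")
    case False
    then have "(j + M) mod N = j + M - N" using assms by (simp add: le_mod_geq)
    then show ?thesis using assms False by linarith
  qed (use assms in simp)
  have "poly r (real ((j + M) + M * N * t)) = 0" for t
  proof -
    have "((j + M) + M * N * t) mod N \<noteq> j"
      using \<open>(j + M) mod N \<noteq> j\<close> by (simp add: mult.commute[of M N] mult.assoc)
    moreover have "((j + M) + M * N * t) mod M = j mod M" by (simp add: mult.assoc)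
    ultimately show ?thesis
      using q[of "(j + M) + M * N * t"] assms(1) by (simp add: basis_fn_nth r_def)
  qed
  then have "r = 0"
    using assms by (intro poly_eq_0_if_zero_on_progression[where a = "j + M" and b = "M * N"]) auto
  with \<open>r - monom 1 k = 0\<close> show False by simp
qed

lemma basis_fn_rational_of_level:
  assumes "N > 0" "j < N"
  shows "\<exists>A B. in_R A B \<and> rat_fps A B = basis_fn N k j \<and>
           (\<forall>z\<in>poles A B. root_of_unity z) \<and> level A B = N"
proof -
  obtain P where P: "degree P < N * (k + 1)"
      "basis_fn N k j = fps_of_poly P * geom_fps N ^ (k + 1)"
    using basis_fn_eq_fraction[OF assms] by blast
  define B where "B = geom_denom N ^ (k + 1)"
  have "degree B = N * (k + 1)"
    unfolding B_def by (simp only: degree_power_eq[OF geom_denom_nonzero[OF assms(1)]]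
        degree_geom_denom[OF assms(1)] mult.commute)
  then have "in_R P B"
    using P(1) assms(1) unfolding in_R_def by (simp add: B_def poly_power poly_geom_denom_0)
  have rat: "rat_fps P B = basis_fn N k j"
    unfolding B_def rat_fps_geom_denom_power[OF assms(1)] P(2) ..
  have pow: "\<forall>z\<in>poles P B. z ^ N = 1"
    unfolding poles_def B_def of_real_poly_power poly_power poly_of_real_poly_geom_denom by auto
  then have roots: "\<forall>z\<in>poles P B. root_of_unity z"
    using assms(1) unfolding root_of_unity_def by blast
  have "level P B > 0"
    using level_pos[OF finite_poles[OF in_R_nonzero[OF \<open>in_R P B\<close>]] roots] .
  moreover have "level P B \<le> N"
    using level_dvd[OF pow] assms(1) by (rule dvd_imp_le)
  moreover have "quasi_poly (level P B) (basis_fn N k j)"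
    using quasi_poly_rat_fps[OF \<open>in_R P B\<close> \<open>level P B > 0\<close>] power_level_eq_1 roots rat
    by auto
  ultimately have "level P B = N"
    using basis_fn_not_quasi_poly[OF assms(2)] by (meson le_neq_implies_less)
  then show ?thesis using \<open>in_R P B\<close> rat roots by blast
qed

theorem mainTheorem8:
  fixes A B :: "real poly" and L :: nat
  assumes "in_R A B"
    and "\<forall>z\<in>poles A B. root_of_unity z"
    and "L = level A B"
  shows "(\<exists>K (c :: nat \<Rightarrow> nat \<Rightarrow> real).
            rat_fps A B = (\<Sum>k<K. \<Sum>j<L. fps_const (c k j) * basis_fn L k j))
       \<and> (\<forall>k j. j < L \<longrightarrow>
            basis_fn L k j \<noteq> 0 \<and>
            (\<exists>e::real. U_op (L + 1) (basis_fn L k j) = fps_const e * basis_fn L k j) \<and>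
            (\<exists>A' B'. in_R A' B' \<and> rat_fps A' B' = basis_fn L k j \<and>
                     (\<forall>z\<in>poles A' B'. root_of_unity z) \<and> level A' B' = L))"
proof (intro conjI allI impI)
  have "L > 0"
    using level_pos[OF finite_poles[OF in_R_nonzero[OF assms(1)]] assms(2)] assms(3) by simp
  moreover have "quasi_poly L (rat_fps A B)"
    using quasi_poly_rat_fps[OF assms(1) \<open>L > 0\<close>] power_level_eq_1 assms(2,3) by auto
  ultimately show "\<exists>K c. rat_fps A B = (\<Sum>k<K. \<Sum>j<L. fps_const (c k j) * basis_fn L k j)"
    by (rule quasi_poly_imp_basis_sum)
  fix k j
  assume "j < L"
  then show "basis_fn L k j \<noteq> 0" by (rule basis_fn_nonzero)
  have "U_op (L + 1) (basis_fn L k j) = fps_const (real (L + 1) ^ k) * basis_fn L k j"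
    using \<open>j < L\<close> mod_add_self1 by (rule U_op_basis_fn)
  then show "\<exists>e. U_op (L + 1) (basis_fn L k j) = fps_const e * basis_fn L k j" ..
  show "\<exists>A' B'. in_R A' B' \<and> rat_fps A' B' = basis_fn L k j \<and>
      (\<forall>z\<in>poles A' B'. root_of_unity z) \<and> level A' B' = L"
    using basis_fn_rational_of_level[OF \<open>L > 0\<close> \<open>j < L\<close>] .
qed

end
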